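(* Let $X_1,\dots,X_n$ be i.i.d. Bernoulli random variables with mean $p\in(0,1)$, $\overline{X}_n=\frac1n\sum_{i=1}^nX_i$, and for $z,p\in(0,1)$ let $\mathscr{M}(z,p)=\big(\frac pz\big)^z\big(\frac{1-p}{1-z}\big)^{1-z}$. Let $\varDelta=\min\Big\{\frac12,\ \frac{\mathscr{C}[z^2+(1-z)^2]}{\sqrt{nz(1-z)}}\Big\}$, where $\mathscr{C}$ is the Berry–Esseen constant. Then $$\Pr\{\overline{X}_n\le z\}\le\Big(\frac12+\varDelta\Big)[\mathscr{M}(z,p)]^n\quad\text{for }z\in(0,p),$$ $$\Pr\{\overline{X}_n\ge z\}\le\Big(\frac12+\varDelta\Big)[\mathscr{M}(z,p)]^n\quad\text{for }z\in(p,1).$$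
   Context: The Berry–Esseen constant $\mathscr{C}$ is a positive absolute constant such that for every random variable $Y$ with $\mathbb{E}[Y]=0$, $\mathbb{E}[Y^2]>0$, $\mathbb{E}[|Y|^3]<\infty$, every $n$ and every $y\in\mathbb{R}$, $|F_n(y)-\Phi(y)|\le\frac{\mathscr{C}}{\sqrt n}\frac{\mathbb{E}[|Y|^3]}{\mathbb{E}^{3/2}[Y^2]}$, where $F_n$ is the cdf of $\sum_{i=1}^nY_i/\sqrt{n\mathbb{E}[Y^2]}$ for i.i.d. copies $Y_i$ of $Y$ and $\Phi$ is the standard normal cdf. *)

theory Defs
  imports "HOL-Probability.Probability"
begin

definition std_normal_cdf :: "real \<Rightarrow> real" where
  "std_normal_cdf y = (LBINT x:{..y}. std_normal_density x)"

text \<open>Berry--Esseen property of a constant C: for every real random variable Y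
  (represented by its law mu, a probability measure on the reals) with E[Y] = 0,
  E[Y^2] > 0, E[|Y|^3] finite, every n >= 1 and every y, the cdf F_n of
  (Y_1 + ... + Y_n) / sqrt(n E[Y^2]) for i.i.d. copies Y_i of Y
  (realised as coordinates of the product measure) satisfies
  |F_n(y) - Phi(y)| <= C / sqrt n * E|Y|^3 / E[Y^2]^(3/2).\<close>
definition berry_esseen_constant :: "real \<Rightarrow> bool" where
  "berry_esseen_constant C \<longleftrightarrow> C > 0 \<and>
     (\<forall>\<mu> :: real measure. prob_space \<mu> \<longrightarrow> sets \<mu> = sets borel \<longrightarrow>
        integrable \<mu> (\<lambda>x. \<bar>x\<bar> ^ 3) \<longrightarrow>
        (\<integral>x. x \<partial>\<mu>) = 0 \<longrightarrow> (\<integral>x. x\<^sup>2 \<partial>\<mu>) > 0 \<longrightarrow>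
        (\<forall>n::nat. n \<ge> 1 \<longrightarrow> (\<forall>y::real.
           \<bar>measure (PiM {..<n} (\<lambda>_. \<mu>))
               {\<omega> \<in> space (PiM {..<n} (\<lambda>_. \<mu>)).
                  (\<Sum>i<n. \<omega> i) / sqrt (real n * (\<integral>x. x\<^sup>2 \<partial>\<mu>)) \<le> y}
             - std_normal_cdf y\<bar>
           \<le> C / sqrt (real n) * (\<integral>x. \<bar>x\<bar> ^ 3 \<partial>\<mu>) / (\<integral>x. x\<^sup>2 \<partial>\<mu>) powr (3/2))))"

definition chernoff_M :: "real \<Rightarrow> real \<Rightarrow> real" where
  "chernoff_M z p = (p / z) powr z * ((1 - p) / (1 - z)) powr (1 - z)"

end

theory Submission
  imports Defs
begin

text \<open>Exponential tilting. Centre the variables at z, so that each X_i - z takes the values 1 - z and -z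
  with probabilities p and 1 - p. The joint law of these variables has density
  prod_i exp (L + s y_i) with respect to the joint law for the parameter z instead of p,
  where exp L = M(z,p) and s \<ge> 0 when z < p; on the event sum_i y_i \<le> 0 the density
  is at most M(z,p)^n. Under the tilted law the centred variables have mean 0, variance z(1-z) and
  third absolute moment z(1-z)(z^2+(1-z)^2), so by Berry--Esseen at 0 the tilted probability of
  sum_i y_i \<le> 0 is at most 1/2 + \<Delta> (and trivially at most 1). The upper tail is the
  lower tail of the variables 1 - X_i, because M(1-z,1-p) = M(z,p).\<close>

definition two_point :: "real \<Rightarrow> real \<Rightarrow> real \<Rightarrow> real measure" where
  "two_point a c q = distr (measure_pmf (bernoulli_pmf q)) borel (\<lambda>b. if b then a else c)"

lemma sets_two_point [simp, measurable_cong]: "sets (two_point a c q) = sets borel"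
  by (simp add: two_point_def)

lemma space_two_point [simp]: "space (two_point a c q) = UNIV"
  by (simp add: two_point_def)

lemma prob_space_two_point: "prob_space (two_point a c q)"
  unfolding two_point_def
  by (rule prob_space.prob_space_distr) (auto simp: prob_space_measure_pmf)

lemma nn_integral_two_point:
  assumes "0 \<le> q" "q \<le> 1" "h \<in> borel_measurable borel"
  shows "(\<integral>\<^sup>+x. h x \<partial>two_point a c q) = h a * ennreal q + h c * ennreal (1 - q)"
  using assms unfolding two_point_def by (subst nn_integral_distr) auto

lemma emeasure_two_point:
  assumes "0 \<le> q" "q \<le> 1" "A \<in> sets borel"
  shows "emeasure (two_point a c q) A = indicator A a * ennreal q + indicator A c * ennreal (1 - q)"
  using assms nn_integral_two_point[of q "indicator A"] by simp

lemma integrable_two_point: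
  "h \<in> borel_measurable borel \<Longrightarrow> integrable (two_point a c q) (h :: real \<Rightarrow> real)"
  unfolding two_point_def
  by (subst integrable_distr_eq) (auto intro!: integrable_measure_pmf_finite)

lemma integral_two_point:
  assumes "0 \<le> q" "q \<le> 1" "h \<in> borel_measurable borel"
  shows "(\<integral>x. h x \<partial>two_point a c q) = h a * q + h c * (1 - q)"
  using assms unfolding two_point_def by (subst integral_distr) auto

lemma distr_two_point:
  "h \<in> borel_measurable borel \<Longrightarrow> distr (two_point a c q) borel h = two_point (h a) (h c) q"
  unfolding two_point_def by (subst distr_distr) (auto simp: comp_def if_distrib)

lemma two_point_eqI:
  assumes "prob_space \<mu>" "sets \<mu> = sets borel" "a \<noteq> c"
    and \<mu>a: "measure \<mu> {a} = q" and \<mu>c: "measure \<mu> {c} = 1 - q"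
  shows "\<mu> = two_point a c q"
proof (rule measure_eqI)
  interpret prob_space \<mu> by fact
  have q: "0 \<le> q" "q \<le> 1"
    using \<mu>a \<mu>c measure_nonneg[of \<mu> "{a}"] measure_nonneg[of \<mu> "{c}"] by auto
  have ev: "{a} \<in> events" "{c} \<in> events"
    using assms(2) by auto
  have "prob ({a} \<union> {c}) = prob {a} + prob {c}"
    using ev assms(3) by (intro finite_measure_Union) auto
  then have ae: "AE x in \<mu>. x \<in> {a} \<union> {c}"
    using \<mu>a \<mu>c by (intro AE_prob_1) simp
  fix A assume A: "A \<in> sets \<mu>"
  have "emeasure \<mu> A = emeasure \<mu> (A \<inter> {a, c})"
    using ae A assms(2) by (intro emeasure_eq_AE) auto
  also have "\<dots> = indicator A a * ennreal q + indicator A c * ennreal (1 - q)"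
  proof -
    have "emeasure \<mu> (A \<inter> {a, c}) = (\<Sum>x\<in>A \<inter> {a, c}. emeasure \<mu> {x})"
      using ev by (intro emeasure_eq_sum_singleton) auto
    also have "\<dots> = indicator A a * ennreal q + indicator A c * ennreal (1 - q)"
      using assms(3) \<mu>a \<mu>c q
      by (cases "a \<in> A"; cases "c \<in> A") (simp_all add: Int_insert_right emeasure_eq_measure flip: ennreal_plus)
    finally show ?thesis .
  qed
  also have "\<dots> = emeasure (two_point a c q) A"
    using A assms(2) q by (simp add: emeasure_two_point)
  finally show "emeasure \<mu> A = emeasure (two_point a c q) A" .
qed (simp add: assms)

lemma (in prob_space) distr_eq_two_point_1_0:
  assumes "X \<in> borel_measurable M"
    and "prob {\<omega> \<in> space M. X \<omega> = 1} = p" "prob {\<omega> \<in> space M. X \<omega> = 0} = 1 - p"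
  shows "distr M borel X = two_point 1 0 p"
proof (rule two_point_eqI)
  have "measure (distr M borel X) {v} = prob {\<omega> \<in> space M. X \<omega> = v}" for v :: real
    using assms(1) by (subst measure_distr) (auto intro!: arg_cong[where f = prob])
  then show "measure (distr M borel X) {1} = p" "measure (distr M borel X) {0} = 1 - p"
    using assms(2,3) by simp_all
qed (use assms(1) in \<open>auto intro: prob_space_distr\<close>)

lemma PiM_density:
  fixes f :: "'i \<Rightarrow> 'a \<Rightarrow> ennreal"
  assumes I: "finite I" and M: "\<And>i. prob_space (M i)"
    and Mf: "\<And>i. prob_space (density (M i) (f i))"
    and f: "\<And>i. i \<in> I \<Longrightarrow> f i \<in> borel_measurable (M i)"
  shows "PiM I (\<lambda>i. density (M i) (f i)) = density (PiM I M) (\<lambda>x. \<Prod>i\<in>I. f i (x i))"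
proof -
  interpret M: product_prob_space M I
    by (intro product_prob_spaceI M)
  interpret D: product_prob_space "\<lambda>i. density (M i) (f i)" I
    by (intro product_prob_spaceI Mf)
  have fm: "(\<lambda>x. \<Prod>i\<in>I. f i (x i)) \<in> borel_measurable (PiM I M)"
    using f by (intro borel_measurable_prod_ennreal measurable_compose[OF measurable_component_singleton]) auto
  show ?thesis
  proof (rule D.PiM_eqI[symmetric])
    show "sets (density (PiM I M) (\<lambda>x. \<Prod>i\<in>I. f i (x i))) = sets (PiM I (\<lambda>i. density (M i) (f i)))"
      by (auto intro!: sets_PiM_cong)
  next
    fix A assume A: "\<And>i. i \<in> I \<Longrightarrow> A i \<in> sets (density (M i) (f i))"
    then have PA: "Pi\<^sub>E I A \<in> sets (PiM I M)"
      using I by (intro sets_PiM_I_finite) auto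
    have "emeasure (density (PiM I M) (\<lambda>x. \<Prod>i\<in>I. f i (x i))) (Pi\<^sub>E I A)
        = (\<integral>\<^sup>+x. (\<Prod>i\<in>I. f i (x i)) * indicator (Pi\<^sub>E I A) x \<partial>PiM I M)"
      by (rule emeasure_density[OF fm PA])
    also have "\<dots> = (\<integral>\<^sup>+x. (\<Prod>i\<in>I. f i (x i) * indicator (A i) (x i)) \<partial>PiM I M)"
      by (intro nn_integral_cong)
         (auto simp: space_PiM prod.distrib indicator_def PiE_def Pi_def prod_zero_iff I)
    also have "\<dots> = (\<Prod>i\<in>I. \<integral>\<^sup>+y. f i y * indicator (A i) y \<partial>M i)"
      using A f I by (intro M.product_nn_integral_prod) auto
    also have "\<dots> = (\<Prod>i\<in>I. emeasure (density (M i) (f i)) (A i))"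
      using A f by (intro prod.cong refl) (simp add: emeasure_density)
    finally show "emeasure (density (PiM I M) (\<lambda>x. \<Prod>i\<in>I. f i (x i))) (Pi\<^sub>E I A)
        = (\<Prod>i\<in>I. emeasure (density (M i) (f i)) (A i))" .
  qed fact
qed

lemma two_point_eq_density:
  assumes "0 \<le> p" "p \<le> 1" "0 \<le> z" "z \<le> 1"
    and g: "g \<in> borel_measurable borel" "\<And>y. 0 \<le> g y"
    and ga: "z * g a = p" and gc: "(1 - z) * g c = 1 - p"
  shows "two_point a c p = density (two_point a c z) (\<lambda>y. ennreal (g y))"
proof (rule measure_eqI)
  fix A assume A: "A \<in> sets (two_point a c p)"
  have "emeasure (density (two_point a c z) (\<lambda>y. ennreal (g y))) A
      = ennreal (g a) * indicator A a * ennreal z + ennreal (g c) * indicator A c * ennreal (1 - z)"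
    using A g assms(3,4) by (simp add: emeasure_density nn_integral_two_point)
  also have "\<dots> = indicator A a * ennreal p + indicator A c * ennreal (1 - p)"
    using ga gc g assms(3,4) by (auto simp: indicator_def ennreal_mult'[symmetric] mult.commute)
  finally show "emeasure (two_point a c p) A = emeasure (density (two_point a c z) (\<lambda>y. ennreal (g y))) A"
    using A assms(1,2) by (simp add: emeasure_two_point)
qed simp

lemma measure_density_le:
  assumes "finite_measure N" "E \<in> sets N" "f \<in> borel_measurable N"
    and "0 \<le> K" "\<And>x. x \<in> E \<Longrightarrow> f x \<le> ennreal K"
  shows "measure (density N f) E \<le> K * measure N E"
proof -
  interpret finite_measure N by fact
  have "emeasure (density N f) E = (\<integral>\<^sup>+x. f x * indicator E x \<partial>N)"
    by (rule emeasure_density[OF assms(3,2)])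
  also have "\<dots> \<le> (\<integral>\<^sup>+x. ennreal K * indicator E x \<partial>N)"
    using assms(5) by (intro nn_integral_mono) (auto simp: indicator_def)
  also have "\<dots> = ennreal (K * measure N E)"
    using assms(2,4) by (simp add: nn_integral_cmult_indicator emeasure_eq_measure ennreal_mult)
  finally show ?thesis
    using assms(4) by (simp add: measure_def enn2real_leI)
qed

lemma (in prob_space) measure_indep_sum_le_eq_PiM:
  fixes Y :: "'i \<Rightarrow> 'a \<Rightarrow> real"
  assumes "I \<noteq> {}" "indep_vars (\<lambda>_. borel) Y I"
    and Y: "\<And>i. i \<in> I \<Longrightarrow> Y i \<in> borel_measurable M" "\<And>i. i \<in> I \<Longrightarrow> distr M borel (Y i) = \<mu>"
  shows "prob {\<omega> \<in> space M. (\<Sum>i\<in>I. Y i \<omega>) \<le> t}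
       = measure (PiM I (\<lambda>_. \<mu>)) {x \<in> space (PiM I (\<lambda>_. \<mu>)). (\<Sum>i\<in>I. x i) \<le> t}"
proof -
  let ?Y = "\<lambda>\<omega>. \<lambda>i\<in>I. Y i \<omega>"
  let ?E = "{x \<in> space (PiM I (\<lambda>_. borel)). (\<Sum>i\<in>I. x i) \<le> t}"
  have Ym: "?Y \<in> measurable M (PiM I (\<lambda>_. borel))"
    using Y(1) by (intro measurable_restrict) auto
  have "distr M (PiM I (\<lambda>_. borel)) ?Y = PiM I (\<lambda>i. distr M borel (Y i))"
    using assms(1,2) Y(1) by (subst (asm) indep_vars_iff_distr_eq_PiM') auto
  also have "\<dots> = PiM I (\<lambda>_. \<mu>)"
    using Y(2) by (intro PiM_cong) auto
  finally have law: "distr M (PiM I (\<lambda>_. borel)) ?Y = PiM I (\<lambda>_. \<mu>)" .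
  have "{\<omega> \<in> space M. (\<Sum>i\<in>I. Y i \<omega>) \<le> t} = ?Y -` ?E \<inter> space M"
    using measurable_space[OF Ym] by auto
  then have "prob {\<omega> \<in> space M. (\<Sum>i\<in>I. Y i \<omega>) \<le> t} = measure (PiM I (\<lambda>_. \<mu>)) ?E"
    using measure_distr[OF Ym, of ?E] law by simp
  moreover have "space (PiM I (\<lambda>_. borel)) = space (PiM I (\<lambda>_. \<mu>))"
    using law by (metis space_distr)
  ultimately show ?thesis by simp
qed

lemma measure_PiM_sum_le_shift:
  fixes \<mu> :: "real measure" and n :: nat
  assumes "prob_space \<mu>" and [measurable_cong]: "sets \<mu> = sets borel"
  shows "measure (PiM {1..n} (\<lambda>_. \<mu>)) {x \<in> space (PiM {1..n} (\<lambda>_. \<mu>)). (\<Sum>i=1..n. x i) \<le> t}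
       = measure (PiM {..<n} (\<lambda>_. \<mu>)) {x \<in> space (PiM {..<n} (\<lambda>_. \<mu>)). (\<Sum>i<n. x i) \<le> t}"
proof -
  interpret product_prob_space "\<lambda>_. \<mu>" "{1..n}"
    by (intro product_prob_spaceI assms)
  let ?f = "\<lambda>\<omega>. \<lambda>i\<in>{..<n}. \<omega> (Suc i)"
  let ?E = "{x \<in> space (PiM {..<n} (\<lambda>_. \<mu>)). (\<Sum>i<n. x i) \<le> t}"
  have law: "distr (PiM {1..n} (\<lambda>_. \<mu>)) (PiM {..<n} (\<lambda>_. \<mu>)) ?f = PiM {..<n} (\<lambda>_. \<mu>)"
    using distr_reorder[of Suc "{..<n}" "{1..n}"] by auto
  have fm: "?f \<in> measurable (PiM {1..n} (\<lambda>_. \<mu>)) (PiM {..<n} (\<lambda>_. \<mu>))"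
    by (intro measurable_restrict) auto
  have "(\<Sum>i=1..n. x i) = (\<Sum>i<n. x (Suc i))" for x :: "nat \<Rightarrow> real"
    by (subst image_Suc_lessThan[symmetric], subst sum.reindex) auto
  then have "?f -` ?E \<inter> space (PiM {1..n} (\<lambda>_. \<mu>))
      = {x \<in> space (PiM {1..n} (\<lambda>_. \<mu>)). (\<Sum>i=1..n. x i) \<le> t}"
    by (auto simp: space_PiM)
  then show ?thesis
    using measure_distr[OF fm, of ?E] law by simp
qed

lemma std_normal_cdf_0: "std_normal_cdf 0 = 1/2"
proof -
  let ?f = "std_normal_density"
  have int: "integrable lborel ?f" by simp
  have intI: "integrable lborel (\<lambda>x. indicator S x * ?f x)" if "S \<in> sets borel" for S :: "real set"
    using integrable_real_mult_indicator[of S lborel ?f] that int by (simp add: mult.commute)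
  have "(\<integral>x. indicator {..0} x * ?f x \<partial>lborel) = (\<integral>x. indicator {..0} x * ?f x \<partial>distr lborel borel uminus)"
    by (simp add: lborel_distr_uminus)
  also have "\<dots> = (\<integral>x. indicator {..0} (-x) * ?f (-x) \<partial>lborel)"
    by (subst integral_distr) auto
  also have "\<dots> = (\<integral>x. indicator {0..} x * ?f x \<partial>lborel)"
    by (intro Bochner_Integration.integral_cong) (auto simp: indicator_def normal_density_def)
  also have "\<dots> = (\<integral>x. indicator {0<..} x * ?f x \<partial>lborel)"
    by (intro integral_cong_AE eventually_mono[OF AE_lborel_singleton[of 0]]) (auto simp: indicator_def)
  finally have eq: "(\<integral>x. indicator {..0} x * ?f x \<partial>lborel) = (\<integral>x. indicator {0<..} x * ?f x \<partial>lborel)" .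
  have "(\<integral>x. indicator {..0} x * ?f x \<partial>lborel) + (\<integral>x. indicator {0<..} x * ?f x \<partial>lborel)
      = (\<integral>x. indicator {..0} x * ?f x + indicator {0<..} x * ?f x \<partial>lborel)"
    by (intro Bochner_Integration.integral_add[symmetric] intI) auto
  also have "\<dots> = (\<integral>x. ?f x \<partial>lborel)"
    by (intro Bochner_Integration.integral_cong) (auto simp: indicator_def)
  also have "\<dots> = 1" by simp
  finally have "(\<integral>x. indicator {..0} x * ?f x \<partial>lborel) = 1/2" using eq by simp
  then show ?thesis by (simp add: std_normal_cdf_def set_lebesgue_integral_def)
qed

lemma berry_esseen_two_point_sum_nonpos:
  assumes C: "berry_esseen_constant C" and z: "0 < z" "z < 1" and n: "n \<ge> 1"
  shows "measure (PiM {..<n} (\<lambda>_. two_point (1 - z) (- z) z))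
           {x \<in> space (PiM {..<n} (\<lambda>_. two_point (1 - z) (- z) z)). (\<Sum>i<n. x i) \<le> 0}
     \<le> 1/2 + C * (z\<^sup>2 + (1 - z)\<^sup>2) / sqrt (real n * z * (1 - z))"
proof -
  let ?\<mu> = "two_point (1 - z) (- z) z"
  let ?P = "PiM {..<n} (\<lambda>_. ?\<mu>)"
  define v where "v = z * (1 - z)"
  have v: "v > 0" using z by (simp add: v_def)
  have mean: "(\<integral>x. x \<partial>?\<mu>) = 0"
    using z by (simp add: integral_two_point algebra_simps)
  have var: "(\<integral>x. x\<^sup>2 \<partial>?\<mu>) = v"
    using z by (simp add: integral_two_point v_def power2_eq_square algebra_simps)
  have abs3: "(\<integral>x. \<bar>x\<bar>^3 \<partial>?\<mu>) = v * (z\<^sup>2 + (1 - z)\<^sup>2)"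
    using z by (simp add: integral_two_point v_def power2_eq_square power3_eq_cube algebra_simps)
  have "\<bar>measure ?P {x \<in> space ?P. (\<Sum>i<n. x i) / sqrt (real n * v) \<le> 0} - std_normal_cdf 0\<bar>
      \<le> C / sqrt (real n) * (v * (z\<^sup>2 + (1 - z)\<^sup>2)) / v powr (3/2)"
    using C n v mean var abs3 unfolding berry_esseen_constant_def
    by (auto intro!: prob_space_two_point integrable_two_point)
  moreover have "{x \<in> space ?P. (\<Sum>i<n. x i) / sqrt (real n * v) \<le> 0} = {x \<in> space ?P. (\<Sum>i<n. x i) \<le> 0}"
  proof -
    have "0 < real n * v" using v n by simp
    then show ?thesis by (auto simp: divide_le_0_iff)
  qed
  moreover have "C / sqrt (real n) * (v * (z\<^sup>2 + (1 - z)\<^sup>2)) / v powr (3/2)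
      = C * (z\<^sup>2 + (1 - z)\<^sup>2) / sqrt (real n * z * (1 - z))"
  proof -
    have "v powr (3/2) = v powr (1 + 1/2)" by simp
    also have "\<dots> = v * sqrt v" using v by (subst powr_add) (simp add: powr_half_sqrt)
    finally have "v powr (3/2) = v * sqrt v" .
    moreover have "sqrt (real n * z * (1 - z)) = sqrt (real n) * sqrt v"
      by (simp add: v_def real_sqrt_mult mult.assoc)
    ultimately show ?thesis using v n by (simp add: field_simps)
  qed
  ultimately show ?thesis
    by (simp add: std_normal_cdf_0 abs_le_iff)
qed

lemma chernoff_M_eq_exp:
  assumes "0 < z" "z < 1" "0 < p" "p < 1"
  shows "chernoff_M z p = exp (z * ln (p / z) + (1 - z) * ln ((1 - p) / (1 - z)))"
  using assms by (simp add: chernoff_M_def powr_def exp_add)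

lemma chernoff_M_complement: "chernoff_M (1 - z) (1 - p) = chernoff_M z p"
  by (simp add: chernoff_M_def mult.commute)

lemma measure_PiM_two_point_sum_nonpos_tilt:
  assumes I: "finite I" and zp: "0 < z" "z \<le> p" "p < 1"
  shows "measure (PiM I (\<lambda>_. two_point (1 - z) (- z) p))
           {x \<in> space (PiM I (\<lambda>_. two_point (1 - z) (- z) p)). (\<Sum>i\<in>I. x i) \<le> 0}
     \<le> chernoff_M z p ^ card I * measure (PiM I (\<lambda>_. two_point (1 - z) (- z) z))
           {x \<in> space (PiM I (\<lambda>_. two_point (1 - z) (- z) z)). (\<Sum>i\<in>I. x i) \<le> 0}"
proof -
  define A where "A = ln (p / z)"
  define B where "B = ln ((1 - p) / (1 - z))"
  define L where "L = z * A + (1 - z) * B"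
  define g where "g y = exp (L + (A - B) * y)" for y
  let ?Q = "\<lambda>q. PiM I (\<lambda>_. two_point (1 - z) (- z) q)"
  let ?E = "{x \<in> space (?Q z). (\<Sum>i\<in>I. x i) \<le> 0}"
  have "B \<le> 0" "0 \<le> A"
    using zp by (simp_all add: A_def B_def)
  have gm: "g \<in> borel_measurable borel"
    unfolding g_def by measurable
  have "L + (A - B) * (1 - z) = A" "L + (A - B) * (- z) = B"
    by (simp_all add: L_def algebra_simps)
  then have "z * g (1 - z) = p" "(1 - z) * g (- z) = 1 - p"
    using zp by (simp_all add: g_def A_def B_def)
  then have dens: "two_point (1 - z) (- z) p = density (two_point (1 - z) (- z) z) (\<lambda>y. ennreal (g y))"
    using zp gm by (intro two_point_eq_density) (auto simp: g_def)
  have "?Q p = PiM I (\<lambda>_. density (two_point (1 - z) (- z) z) (\<lambda>y. ennreal (g y)))"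
    by (simp add: dens)
  also have "\<dots> = density (?Q z) (\<lambda>x. \<Prod>i\<in>I. ennreal (g (x i)))"
    using I gm by (intro PiM_density prob_space_two_point) (auto simp flip: dens intro: prob_space_two_point)
  finally have Qp: "?Q p = density (?Q z) (\<lambda>x. \<Prod>i\<in>I. ennreal (g (x i)))" .
  have "(\<Prod>i\<in>I. ennreal (g (x i))) \<le> ennreal (chernoff_M z p ^ card I)" if "x \<in> ?E" for x
  proof -
    have "(\<Prod>i\<in>I. g (x i)) = exp (\<Sum>i\<in>I. L + (A - B) * x i)"
      using I by (simp add: g_def exp_sum)
    also have "\<dots> = exp (real (card I) * L + (A - B) * (\<Sum>i\<in>I. x i))"
      by (simp add: sum.distrib sum_distrib_left)
    also have "\<dots> \<le> exp (real (card I) * L)"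
      using that \<open>B \<le> 0\<close> \<open>0 \<le> A\<close> by (simp add: mult_nonneg_nonpos)
    also have "\<dots> = chernoff_M z p ^ card I"
      using zp by (simp add: chernoff_M_eq_exp L_def A_def B_def exp_of_nat_mult)
    finally show ?thesis
      by (simp add: prod_ennreal g_def ennreal_leI)
  qed
  then have "measure (?Q p) ?E \<le> chernoff_M z p ^ card I * measure (?Q z) ?E"
    unfolding Qp using I gm
    by (intro measure_density_le prob_space.finite_measure prob_space_PiM prob_space_two_point)
       (auto simp: chernoff_M_def)
  moreover have "space (?Q p) = space (?Q z)"
    by (simp add: space_PiM)
  ultimately show ?thesis by simp
qed

lemma bernoulli_mean_lower_tail:
  fixes M :: "'a measure" and X :: "nat \<Rightarrow> 'a \<Rightarrow> real"
  assumes "prob_space M" "berry_esseen_constant C" "n \<ge> 1" "0 < z" "z < p" "p < 1"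
    and Xm: "\<And>i. i \<in> {1..n} \<Longrightarrow> X i \<in> borel_measurable M"
    and ind: "prob_space.indep_vars M (\<lambda>_. borel) X {1..n}"
    and X1: "\<And>i. i \<in> {1..n} \<Longrightarrow> measure M {\<omega> \<in> space M. X i \<omega> = 1} = p"
    and X0: "\<And>i. i \<in> {1..n} \<Longrightarrow> measure M {\<omega> \<in> space M. X i \<omega> = 0} = 1 - p"
  shows "measure M {\<omega> \<in> space M. (\<Sum>i=1..n. X i \<omega>) / real n \<le> z}
     \<le> (1/2 + min (1/2) (C * (z\<^sup>2 + (1 - z)\<^sup>2) / sqrt (real n * z * (1 - z)))) * chernoff_M z p ^ n"
proof -
  interpret prob_space M by fact
  let ?\<mu> = "two_point (1 - z) (- z)"
  let ?P = "\<lambda>I q. measure (PiM I (\<lambda>_. ?\<mu> q)) {x \<in> space (PiM I (\<lambda>_. ?\<mu> q)). (\<Sum>i\<in>I. x i) \<le> 0}"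
  have law: "distr M borel (\<lambda>\<omega>. X i \<omega> - z) = ?\<mu> p" if "i \<in> {1..n}" for i
  proof -
    have "distr M borel (\<lambda>\<omega>. X i \<omega> - z) = distr (distr M borel (X i)) borel (\<lambda>x. x - z)"
      using Xm[OF that] by (subst distr_distr) (auto simp: comp_def)
    also have "\<dots> = ?\<mu> p"
      using Xm[OF that] X1[OF that] X0[OF that]
      by (simp add: distr_eq_two_point_1_0 distr_two_point)
    finally show ?thesis .
  qed
  have "{\<omega> \<in> space M. (\<Sum>i=1..n. X i \<omega>) / real n \<le> z} = {\<omega> \<in> space M. (\<Sum>i\<in>{1..n}. X i \<omega> - z) \<le> 0}"
    using \<open>n \<ge> 1\<close> by (auto simp: sum_subtractf divide_le_eq mult.commute)
  then have "prob {\<omega> \<in> space M. (\<Sum>i=1..n. X i \<omega>) / real n \<le> z} = ?P {1..n} p"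
  proof (simp only:, intro measure_indep_sum_le_eq_PiM)
    show "indep_vars (\<lambda>_. borel) (\<lambda>i \<omega>. X i \<omega> - z) {1..n}"
      by (rule indep_vars_compose2[OF ind, where Y = "\<lambda>_ x. x - z"]) simp
  qed (use \<open>n \<ge> 1\<close> Xm law in auto)
  also have "\<dots> \<le> chernoff_M z p ^ n * ?P {1..n} z"
    using measure_PiM_two_point_sum_nonpos_tilt[of "{1..n}" z p] assms(4-6) by simp
  also have "\<dots> = chernoff_M z p ^ n * ?P {..<n} z"
    using measure_PiM_sum_le_shift[OF prob_space_two_point] by simp
  also have "\<dots> \<le> chernoff_M z p ^ n * (1/2 + min (1/2) (C * (z\<^sup>2 + (1 - z)\<^sup>2) / sqrt (real n * z * (1 - z))))"
  proof (intro mult_left_mono)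
    interpret Q: prob_space "PiM {..<n} (\<lambda>_. ?\<mu> z)"
      by (intro prob_space_PiM prob_space_two_point)
    show "?P {..<n} z \<le> 1/2 + min (1/2) (C * (z\<^sup>2 + (1 - z)\<^sup>2) / sqrt (real n * z * (1 - z)))"
      using berry_esseen_two_point_sum_nonpos[OF assms(2,4) _ assms(3)] assms(5,6)
      by (simp add: min_def)
  qed (simp add: chernoff_M_def)
  finally show ?thesis
    by (simp add: mult.commute)
qed

lemma bernoulli_mean_upper_tail:
  fixes M :: "'a measure" and X :: "nat \<Rightarrow> 'a \<Rightarrow> real"
  assumes "prob_space M" "berry_esseen_constant C" "n \<ge> 1" "0 < p" "p < z" "z < 1"
    and Xm: "\<And>i. i \<in> {1..n} \<Longrightarrow> X i \<in> borel_measurable M"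
    and ind: "prob_space.indep_vars M (\<lambda>_. borel) X {1..n}"
    and X1: "\<And>i. i \<in> {1..n} \<Longrightarrow> measure M {\<omega> \<in> space M. X i \<omega> = 1} = p"
    and X0: "\<And>i. i \<in> {1..n} \<Longrightarrow> measure M {\<omega> \<in> space M. X i \<omega> = 0} = 1 - p"
  shows "measure M {\<omega> \<in> space M. (\<Sum>i=1..n. X i \<omega>) / real n \<ge> z}
     \<le> (1/2 + min (1/2) (C * (z\<^sup>2 + (1 - z)\<^sup>2) / sqrt (real n * z * (1 - z)))) * chernoff_M z p ^ n"
proof -
  interpret prob_space M by fact
  have "measure M {\<omega> \<in> space M. (\<Sum>i=1..n. 1 - X i \<omega>) / real n \<le> 1 - z}
      \<le> (1/2 + min (1/2) (C * ((1 - z)\<^sup>2 + (1 - (1 - z))\<^sup>2) / sqrt (real n * (1 - z) * (1 - (1 - z)))))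
         * chernoff_M (1 - z) (1 - p) ^ n"
  proof (rule bernoulli_mean_lower_tail)
    show "indep_vars (\<lambda>_. borel) (\<lambda>i \<omega>. 1 - X i \<omega>) {1..n}"
      by (rule indep_vars_compose2[OF ind, where Y = "\<lambda>_ x. 1 - x"]) simp
    have "{\<omega> \<in> space M. 1 - X i \<omega> = v} = {\<omega> \<in> space M. X i \<omega> = 1 - v}" for i v
      by auto
    then show "measure M {\<omega> \<in> space M. 1 - X i \<omega> = 1} = 1 - p"
      "measure M {\<omega> \<in> space M. 1 - X i \<omega> = 0} = 1 - (1 - p)" if "i \<in> {1..n}" for i
      using X1[OF that] X0[OF that] by simp_all
  qed (use assms in auto)
  moreover have "{\<omega> \<in> space M. (\<Sum>i=1..n. 1 - X i \<omega>) / real n \<le> 1 - z}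
      = {\<omega> \<in> space M. (\<Sum>i=1..n. X i \<omega>) / real n \<ge> z}"
    using assms(3) by (auto simp: sum_subtractf diff_divide_distrib)
  ultimately show ?thesis
    by (simp add: chernoff_M_complement add.commute mult.commute mult.left_commute)
qed

theorem theorem6:
  fixes M :: "'a measure" and X :: "nat \<Rightarrow> 'a \<Rightarrow> real"
    and n :: nat and p z C :: real
  assumes "prob_space M"
    and "berry_esseen_constant C"
    and "n \<ge> 1"
    and "0 < p" "p < 1"
    and "\<And>i. i \<in> {1..n} \<Longrightarrow> X i \<in> borel_measurable M"
    and "prob_space.indep_vars M (\<lambda>_. borel) X {1..n}"
    and "\<And>i. i \<in> {1..n} \<Longrightarrow> measure M {\<omega> \<in> space M. X i \<omega> = 1} = p"
    and "\<And>i. i \<in> {1..n} \<Longrightarrow> measure M {\<omega> \<in> space M. X i \<omega> = 0} = 1 - p"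
  shows "(0 < z \<and> z < p \<longrightarrow>
           measure M {\<omega> \<in> space M. (\<Sum>i=1..n. X i \<omega>) / real n \<le> z}
             \<le> (1/2 + min (1/2) (C * (z\<^sup>2 + (1 - z)\<^sup>2) / sqrt (real n * z * (1 - z))))
                * chernoff_M z p ^ n) \<and>
         (p < z \<and> z < 1 \<longrightarrow>
           measure M {\<omega> \<in> space M. (\<Sum>i=1..n. X i \<omega>) / real n \<ge> z}
             \<le> (1/2 + min (1/2) (C * (z\<^sup>2 + (1 - z)\<^sup>2) / sqrt (real n * z * (1 - z))))
                * chernoff_M z p ^ n)"
  using bernoulli_mean_lower_tail[of M C n z p X] bernoulli_mean_upper_tail[of M C n p z X] assms
  by blast

end
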